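(* For any $k$-algebra $A$, the map $\mathrm{Irr}(A)\to\mathrm{Irr}(A_{\mathbb{C}})$, $V\mapsto V_{\mathbb{C}}$, is a bijection.
   Context: $k=\mathcal{O}(X)$ is the coordinate algebra of a complex affine variety $X$. A $k$-algebra is a (not necessarily unital or commutative) $\mathbb{C}$-algebra $A$ which is a unital left $k$-module with $\lambda(\omega a)=\omega(\lambda a)=(\lambda\omega)a$ and $\omega(a_1a_2)=(\omega a_1)a_2=a_1(\omega a_2)$. An $A$-module is a complex vector space $V$ with algebra morphisms $A\to\mathrm{Hom}_{\mathbb{C}}(V,V)$ and a unital $k\to\mathrm{Hom}_{\mathbb{C}}(V,V)$ with $(\omega a)v=\omega(av)=a(\omega v)$; irreducible means $AV\neq 0$ and no subspace $0\neq W\neq V$ stable under $A$ and $k$; two $A$-modules are equivalent if there is a linear isomorphism intertwining both the $A$- and $k$-actions. $\mathrm{Irr}(A)$ is the set of equivalence classes of irreducible $A$-modules. $A_{\mathbb{C}}$ is $A$ with the $k$-action forgotten; irreducibility and equivalence of $A_{\mathbb{C}}$-modules are defined the same way using only the action of $A_{\mathbb{C}}$, and $\mathrm{Irr}(A_{\mathbb{C}})$ is the set of equivalence classes of irreducible $A_{\mathbb{C}}$-modules. $V_{\mathbb{C}}$ is the $A$-module $V$ with the $k$-action forgotten. *)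

theory Defs
  imports Complex_Main
begin

text \<open>A complex algebra: a ring (class ring is non-unital) together with a complex
  scalar multiplication making it a complex vector space, bilinear multiplication.\<close>
definition complex_algebra :: "(complex \<Rightarrow> 'a::ring \<Rightarrow> 'a) \<Rightarrow> bool" where
  "complex_algebra s \<longleftrightarrow> vector_space s \<and>
     (\<forall>c x y. s c (x * y) = s c x * y \<and> s c (x * y) = x * s c y)"

inductive_set gen_subalg :: "(complex \<Rightarrow> 'k::comm_ring_1 \<Rightarrow> 'k) \<Rightarrow> 'k set \<Rightarrow> 'k set"
  for s :: "complex \<Rightarrow> 'k \<Rightarrow> 'k" and S :: "'k set" where
  gen: "x \<in> S \<Longrightarrow> x \<in> gen_subalg s S"
| one: "1 \<in> gen_subalg s S"
| add: "x \<in> gen_subalg s S \<Longrightarrow> y \<in> gen_subalg s S \<Longrightarrow> x + y \<in> gen_subalg s S"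
| mult: "x \<in> gen_subalg s S \<Longrightarrow> y \<in> gen_subalg s S \<Longrightarrow> x * y \<in> gen_subalg s S"
| scale: "x \<in> gen_subalg s S \<Longrightarrow> s c x \<in> gen_subalg s S"

text \<open>Coordinate algebras of complex affine varieties = finitely generated reduced
  commutative unital complex algebras.\<close>
definition coordinate_algebra :: "(complex \<Rightarrow> 'k::comm_ring_1 \<Rightarrow> 'k) \<Rightarrow> bool" where
  "coordinate_algebra s \<longleftrightarrow> complex_algebra s \<and>
     (\<exists>S. finite S \<and> gen_subalg s S = UNIV) \<and>
     (\<forall>(x::'k) (n::nat). x ^ n = 0 \<longrightarrow> x = 0)"

definition k_algebra ::
  "(complex \<Rightarrow> 'k::comm_ring_1 \<Rightarrow> 'k) \<Rightarrow> (complex \<Rightarrow> 'a::ring \<Rightarrow> 'a) \<Rightarrow> ('k \<Rightarrow> 'a \<Rightarrow> 'a) \<Rightarrow> bool" where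
  "k_algebra sK sA act \<longleftrightarrow> complex_algebra sA \<and> module act \<and>
     (\<forall>c w a. sA c (act w a) = act w (sA c a) \<and> sA c (act w a) = act (sK c w) a) \<and>
     (\<forall>w a1 a2. act w (a1 * a2) = act w a1 * a2 \<and> act w (a1 * a2) = a1 * act w a2)"

definition AC_module ::
  "(complex \<Rightarrow> 'a::ring \<Rightarrow> 'a) \<Rightarrow> (complex \<Rightarrow> 'v::ab_group_add \<Rightarrow> 'v) \<Rightarrow> ('a \<Rightarrow> 'v \<Rightarrow> 'v) \<Rightarrow> bool" where
  "AC_module sA sV rho \<longleftrightarrow> vector_space sV \<and>
     (\<forall>a. Vector_Spaces.linear sV sV (rho a)) \<and>
     (\<forall>a b v. rho (a + b) v = rho a v + rho b v) \<and>
     (\<forall>c a v. rho (sA c a) v = sV c (rho a v)) \<and>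
     (\<forall>a b v. rho (a * b) v = rho a (rho b v))"

definition A_module ::
  "(complex \<Rightarrow> 'k::comm_ring_1 \<Rightarrow> 'k) \<Rightarrow> (complex \<Rightarrow> 'a::ring \<Rightarrow> 'a) \<Rightarrow> ('k \<Rightarrow> 'a \<Rightarrow> 'a) \<Rightarrow>
   (complex \<Rightarrow> 'v::ab_group_add \<Rightarrow> 'v) \<Rightarrow> ('a \<Rightarrow> 'v \<Rightarrow> 'v) \<Rightarrow> ('k \<Rightarrow> 'v \<Rightarrow> 'v) \<Rightarrow> bool" where
  "A_module sK sA act sV rho kap \<longleftrightarrow> AC_module sA sV rho \<and>
     (\<forall>w. Vector_Spaces.linear sV sV (kap w)) \<and>
     (\<forall>w u v. kap (w + u) v = kap w v + kap u v) \<and>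
     (\<forall>c w v. kap (sK c w) v = sV c (kap w v)) \<and>
     (\<forall>w u v. kap (w * u) v = kap w (kap u v)) \<and>
     (\<forall>v. kap 1 v = v) \<and>
     (\<forall>w a v. rho (act w a) v = kap w (rho a v) \<and> rho (act w a) v = rho a (kap w v))"

definition irreducible_AC ::
  "(complex \<Rightarrow> 'a::ring \<Rightarrow> 'a) \<Rightarrow> (complex \<Rightarrow> 'v::ab_group_add \<Rightarrow> 'v) \<Rightarrow> ('a \<Rightarrow> 'v \<Rightarrow> 'v) \<Rightarrow> bool" where
  "irreducible_AC sA sV rho \<longleftrightarrow> AC_module sA sV rho \<and>
     (\<exists>a v. rho a v \<noteq> 0) \<and>
     \<not> (\<exists>W. module.subspace sV W \<and> W \<noteq> {0} \<and> W \<noteq> UNIV \<and>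
            (\<forall>a. \<forall>v\<in>W. rho a v \<in> W))"

definition irreducible_A ::
  "(complex \<Rightarrow> 'k::comm_ring_1 \<Rightarrow> 'k) \<Rightarrow> (complex \<Rightarrow> 'a::ring \<Rightarrow> 'a) \<Rightarrow> ('k \<Rightarrow> 'a \<Rightarrow> 'a) \<Rightarrow>
   (complex \<Rightarrow> 'v::ab_group_add \<Rightarrow> 'v) \<Rightarrow> ('a \<Rightarrow> 'v \<Rightarrow> 'v) \<Rightarrow> ('k \<Rightarrow> 'v \<Rightarrow> 'v) \<Rightarrow> bool" where
  "irreducible_A sK sA act sV rho kap \<longleftrightarrow> A_module sK sA act sV rho kap \<and>
     (\<exists>a v. rho a v \<noteq> 0) \<and>
     \<not> (\<exists>W. module.subspace sV W \<and> W \<noteq> {0} \<and> W \<noteq> UNIV \<and>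
            (\<forall>a. \<forall>v\<in>W. rho a v \<in> W) \<and> (\<forall>w. \<forall>v\<in>W. kap w v \<in> W))"

definition equiv_AC ::
  "(complex \<Rightarrow> 'v::ab_group_add \<Rightarrow> 'v) \<Rightarrow> ('a \<Rightarrow> 'v \<Rightarrow> 'v) \<Rightarrow>
   (complex \<Rightarrow> 'w::ab_group_add \<Rightarrow> 'w) \<Rightarrow> ('a \<Rightarrow> 'w \<Rightarrow> 'w) \<Rightarrow> bool" where
  "equiv_AC sV rhoV sW rhoW \<longleftrightarrow>
     (\<exists>T. Vector_Spaces.linear sV sW T \<and> bij T \<and> (\<forall>a v. T (rhoV a v) = rhoW a (T v)))"

definition equiv_A ::
  "(complex \<Rightarrow> 'v::ab_group_add \<Rightarrow> 'v) \<Rightarrow> ('a \<Rightarrow> 'v \<Rightarrow> 'v) \<Rightarrow> ('k \<Rightarrow> 'v \<Rightarrow> 'v) \<Rightarrow>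
   (complex \<Rightarrow> 'w::ab_group_add \<Rightarrow> 'w) \<Rightarrow> ('a \<Rightarrow> 'w \<Rightarrow> 'w) \<Rightarrow> ('k \<Rightarrow> 'w \<Rightarrow> 'w) \<Rightarrow> bool" where
  "equiv_A sV rhoV kapV sW rhoW kapW \<longleftrightarrow>
     (\<exists>T. Vector_Spaces.linear sV sW T \<and> bij T \<and> (\<forall>a v. T (rhoV a v) = rhoW a (T v)) \<and>
          (\<forall>w v. T (kapV w v) = kapW w (T v)))"

end

theory Submission
  imports Defs
begin

text \<open>Write \<open>A V\<close> for the span of all \<open>a v\<close>. An irreducible \<open>A\<^sub>\<complex>\<close>-module \<open>V\<close> is nondegenerate:
  \<open>A V = V\<close> and no nonzero vector is killed by all of \<open>A\<close>, since both \<open>A V\<close> and the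
  annihilated vectors form invariant subspaces. On such a module the \<open>k\<close>-action is forced and
  exists: \<open>w (\<Sum> a\<^sub>i v\<^sub>i) = \<Sum> (w a\<^sub>i) v\<^sub>i\<close> is well defined because the difference of two
  presentations of the same vector is annihilated by \<open>A\<close>, as \<open>b (w a) = (w b) a\<close>. Uniqueness
  of the \<open>k\<close>-action makes every \<open>A\<^sub>\<complex>\<close>-intertwiner a \<open>k\<close>-intertwiner, and for an
  \<open>A\<close>-invariant subspace \<open>W\<close> the subspace \<open>A W\<close> is also \<open>k\<close>-invariant, so irreducibility
  over \<open>A\<close> and over \<open>A\<^sub>\<complex>\<close> coincide.\<close>

definition action_sum :: "('a \<Rightarrow> 'v \<Rightarrow> 'w) \<Rightarrow> ('a \<times> 'v) list \<Rightarrow> 'w::comm_monoid_add" where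
  "action_sum rho xs = (\<Sum>(a, v)\<leftarrow>xs. rho a v)"

lemma action_sum_simps [simp]:
  "action_sum rho [] = 0"
  "action_sum rho ((a, v) # xs) = rho a v + action_sum rho xs"
  "action_sum rho (xs @ ys) = action_sum rho xs + action_sum rho ys"
  by (simp_all add: action_sum_def)

lemma action_sum_map_apfst:
  "action_sum rho (map (apfst f) xs) = action_sum (\<lambda>a. rho (f a)) xs"
  by (induction xs) auto

lemma additive_action_sum:
  fixes f :: "'v::cancel_comm_monoid_add \<Rightarrow> 'w::cancel_comm_monoid_add"
  assumes "\<And>x y. f (x + y) = f x + f y"
  shows "f (action_sum rho xs) = action_sum (\<lambda>a v. f (rho a v)) xs"
proof -
  have "f 0 = 0"
    using assms[of 0 0] by simp
  then show ?thesis
    by (induction xs) (auto simp: assms)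
qed

locale alg_module =
  fixes sA :: "complex \<Rightarrow> 'a::ring \<Rightarrow> 'a"
    and sV :: "complex \<Rightarrow> 'v::ab_group_add \<Rightarrow> 'v"
    and rho :: "'a \<Rightarrow> 'v \<Rightarrow> 'v"
  assumes AC_module: "AC_module sA sV rho"
begin

sublocale V: vector_space sV
  using AC_module by (simp add: AC_module_def)

sublocale rho: Vector_Spaces.linear sV sV "rho a" for a
  using AC_module by (simp add: AC_module_def)

lemma rho_add_left: "rho (a + b) v = rho a v + rho b v"
  and rho_scale_left: "rho (sA c a) v = sV c (rho a v)"
  and rho_mult: "rho (a * b) v = rho a (rho b v)"
  using AC_module by (simp_all add: AC_module_def)

lemma rho_action_sum: "rho a (action_sum rho xs) = action_sum rho (map (apfst ((*) a)) xs)"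
  by (simp add: additive_action_sum rho.add action_sum_map_apfst rho_mult[symmetric])

lemma scale_action_sum: "sV c (action_sum rho xs) = action_sum rho (map (apfst (sA c)) xs)"
  by (simp add: additive_action_sum V.scale_right_distrib action_sum_map_apfst rho_scale_left[symmetric])

definition span_action :: "'v set \<Rightarrow> 'v set" where
  "span_action X = {action_sum rho xs | xs. set xs \<subseteq> UNIV \<times> X}"

definition annihilated :: "'v set" where
  "annihilated = {v. \<forall>a. rho a v = 0}"

lemma rho_in_span_action: "v \<in> X \<Longrightarrow> rho a v \<in> span_action X"
  unfolding span_action_def by (auto intro!: exI[of _ "[(a, v)]"])

lemma subspace_span_action: "V.subspace (span_action X)"
  unfolding V.subspace_def span_action_def
proof (intro conjI ballI allI)
  show "0 \<in> {action_sum rho xs | xs. set xs \<subseteq> UNIV \<times> X}"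
    by (auto intro!: exI[of _ "[]"])
next
  fix x y
  assume "x \<in> {action_sum rho xs | xs. set xs \<subseteq> UNIV \<times> X}"
    and "y \<in> {action_sum rho xs | xs. set xs \<subseteq> UNIV \<times> X}"
  then obtain xs ys where "set xs \<subseteq> UNIV \<times> X" "x = action_sum rho xs"
    and "set ys \<subseteq> UNIV \<times> X" "y = action_sum rho ys"
    by auto
  then show "x + y \<in> {action_sum rho xs | xs. set xs \<subseteq> UNIV \<times> X}"
    by (auto intro!: exI[of _ "xs @ ys"])
next
  fix c x
  assume "x \<in> {action_sum rho xs | xs. set xs \<subseteq> UNIV \<times> X}"
  then obtain xs where "set xs \<subseteq> UNIV \<times> X" "x = action_sum rho xs"
    by auto
  then show "sV c x \<in> {action_sum rho xs | xs. set xs \<subseteq> UNIV \<times> X}"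
    by (intro CollectI exI[of _ "map (apfst (sA c)) xs"] conjI) (auto simp: scale_action_sum)
qed

lemma span_action_map_apfst:
  assumes "v \<in> span_action X" and "\<And>xs. f (action_sum rho xs) = action_sum rho (map (apfst g) xs)"
  shows "f v \<in> span_action X"
  using assms unfolding span_action_def by fastforce

lemma span_action_invariant:
  assumes "v \<in> span_action X"
  shows "rho a v \<in> span_action X"
  using span_action_map_apfst[OF assms rho_action_sum] .

lemma span_action_subset:
  assumes W: "V.subspace W" "\<forall>a. \<forall>v\<in>W. rho a v \<in> W"
  shows "span_action W \<subseteq> W"
proof -
  have "set xs \<subseteq> UNIV \<times> W \<Longrightarrow> action_sum rho xs \<in> W" for xs
    by (induction xs) (use W in \<open>auto simp: V.subspace_def\<close>)
  then show ?thesis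
    unfolding span_action_def by blast
qed

lemma subspace_annihilated: "V.subspace annihilated"
  unfolding V.subspace_def annihilated_def by (simp add: rho.add rho.scale)

lemma annihilated_invariant: "v \<in> annihilated \<Longrightarrow> rho a v \<in> annihilated"
  unfolding annihilated_def by simp

text \<open>The predicate \<open>P\<close> lets invariant subspaces be required to respect extra structure,
  such as a \<open>k\<close>-action.\<close>
lemma nondegenerate_if_no_invariant_subspace:
  assumes "rho a v \<noteq> 0"
    and simple: "\<And>W. V.subspace W \<Longrightarrow> \<forall>a. \<forall>v\<in>W. rho a v \<in> W \<Longrightarrow> P W \<Longrightarrow>
      W = {0} \<or> W = UNIV"
    and "P (span_action UNIV)" "P annihilated"
  shows "span_action UNIV = UNIV" "annihilated = {0}"
proof -
  have "span_action UNIV \<noteq> {0}"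
    using rho_in_span_action[of v UNIV a] assms(1) by auto
  then show "span_action UNIV = UNIV"
    using simple[OF subspace_span_action] span_action_invariant assms(3) by blast
  have "annihilated \<noteq> UNIV"
    using assms(1) by (auto simp: annihilated_def)
  then show "annihilated = {0}"
    using simple[OF subspace_annihilated] annihilated_invariant assms(4) by blast
qed

lemma nondegenerate_if_irreducible_AC:
  assumes "irreducible_AC sA sV rho"
  shows "span_action UNIV = UNIV" "annihilated = {0}"
proof -
  obtain a v where av: "rho a v \<noteq> 0"
    using assms unfolding irreducible_AC_def by blast
  have simple: "W = {0} \<or> W = UNIV" if "V.subspace W" "\<forall>a. \<forall>v\<in>W. rho a v \<in> W" for W
    using assms that by (auto simp: irreducible_AC_def)
  show "span_action UNIV = UNIV" "annihilated = {0}"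
    by (rule nondegenerate_if_no_invariant_subspace[where P = "\<lambda>_. True", OF av];
        simp add: simple)+
qed

lemma additive_eq_on_span_action:
  fixes f g :: "'v \<Rightarrow> 'w::ab_group_add"
  assumes "span_action UNIV = UNIV"
    and "\<And>x y. f (x + y) = f x + f y" "\<And>x y. g (x + y) = g x + g y"
    and "\<And>a v. f (rho a v) = g (rho a v)"
  shows "f x = g x"
proof -
  obtain xs where "x = action_sum rho xs"
    using assms(1) unfolding span_action_def by blast
  then show ?thesis
    by (simp add: additive_action_sum assms(2-4))
qed

end

locale k_alg_module = alg_module sA sV rho
  for sA :: "complex \<Rightarrow> 'a::ring \<Rightarrow> 'a"
    and sV :: "complex \<Rightarrow> 'v::ab_group_add \<Rightarrow> 'v"
    and rho :: "'a \<Rightarrow> 'v \<Rightarrow> 'v" +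
  fixes sK :: "complex \<Rightarrow> 'k::comm_ring_1 \<Rightarrow> 'k"
    and act :: "'k \<Rightarrow> 'a \<Rightarrow> 'a"
    and kap :: "'k \<Rightarrow> 'v \<Rightarrow> 'v"
  assumes A_module: "A_module sK sA act sV rho kap"
begin

lemma kap_add: "kap w (x + y) = kap w x + kap w y"
  using A_module by (simp add: A_module_def Vector_Spaces.linear_iff)

lemma rho_act_eq_kap_rho: "rho (act w a) v = kap w (rho a v)"
  using A_module unfolding A_module_def by blast

lemma rho_act_eq_rho_kap: "rho (act w a) v = rho a (kap w v)"
  using A_module unfolding A_module_def by blast

lemma kap_action_sum: "kap w (action_sum rho xs) = action_sum rho (map (apfst (act w)) xs)"
  by (simp add: additive_action_sum kap_add action_sum_map_apfst rho_act_eq_kap_rho[symmetric])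

lemma span_action_kap_invariant:
  assumes "v \<in> span_action X"
  shows "kap w v \<in> span_action X"
  using span_action_map_apfst[OF assms kap_action_sum] .

lemma annihilated_kap_invariant: "v \<in> annihilated \<Longrightarrow> kap w v \<in> annihilated"
  unfolding annihilated_def by (simp add: rho_act_eq_rho_kap[symmetric])

lemma nondegenerate_if_irreducible_A:
  assumes "irreducible_A sK sA act sV rho kap"
  shows "span_action UNIV = UNIV" "annihilated = {0}"
proof -
  obtain a v where av: "rho a v \<noteq> 0"
    using assms unfolding irreducible_A_def by blast
  have simple: "W = {0} \<or> W = UNIV"
    if "V.subspace W" "\<forall>a. \<forall>v\<in>W. rho a v \<in> W" "\<forall>w. \<forall>v\<in>W. kap w v \<in> W" for W
    using assms that by (auto simp: irreducible_A_def)
  show "span_action UNIV = UNIV" "annihilated = {0}"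
    by (rule nondegenerate_if_no_invariant_subspace[where P = "\<lambda>W. \<forall>w. \<forall>v\<in>W. kap w v \<in> W",
          OF av simple]; use span_action_kap_invariant annihilated_kap_invariant in blast)+
qed

lemma irreducible_AC_if_irreducible_A:
  assumes irr: "irreducible_A sK sA act sV rho kap"
  shows "irreducible_AC sA sV rho"
proof -
  have no_invariant:
    "W = {0} \<or> W = UNIV"
    if "V.subspace W" "\<forall>a. \<forall>v\<in>W. rho a v \<in> W" "\<forall>w. \<forall>v\<in>W. kap w v \<in> W" for W
    using irr that unfolding irreducible_A_def by blast
  have "W = {0} \<or> W = UNIV" if W: "V.subspace W" "\<forall>a. \<forall>v\<in>W. rho a v \<in> W" for W
  proof (cases "span_action W = {0}")
    case True
    then have "W \<subseteq> annihilated"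
      using rho_in_span_action[of _ W] by (auto simp: annihilated_def)
    then show ?thesis
      using nondegenerate_if_irreducible_A(2)[OF irr] W(1) V.subspace_0 by blast
  next
    case False
    then have "span_action W = UNIV"
      using no_invariant[OF subspace_span_action] span_action_invariant span_action_kap_invariant
      by blast
    then show ?thesis
      using span_action_subset[OF W] by blast
  qed
  moreover obtain a v where "rho a v \<noteq> 0"
    using irr unfolding irreducible_A_def by blast
  ultimately show ?thesis
    using AC_module unfolding irreducible_AC_def by blast
qed

lemma irreducible_A_iff_irreducible_AC:
  "irreducible_A sK sA act sV rho kap \<longleftrightarrow> irreducible_AC sA sV rho"
proof
  show "irreducible_AC sA sV rho \<Longrightarrow> irreducible_A sK sA act sV rho kap"
    by (auto simp: irreducible_A_def irreducible_AC_def A_module)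
qed (fact irreducible_AC_if_irreducible_A)

end

lemma k_alg_module_if_A_module:
  assumes "A_module sK sA act sV rho kap"
  shows "k_alg_module sA sV rho sK act kap"
proof
  show "AC_module sA sV rho"
    using assms by (simp add: A_module_def)
qed (fact assms)

lemma k_alg_module_if_irreducible_A:
  "irreducible_A sK sA act sV rho kap \<Longrightarrow> k_alg_module sA sV rho sK act kap"
  by (simp add: irreducible_A_def k_alg_module_if_A_module)

lemma intertwiner_commutes_with_k_action:
  assumes V: "k_alg_module sA sV rhoV sK act kapV" "alg_module.span_action rhoV UNIV = UNIV"
    and W: "k_alg_module sA sW rhoW sK act kapW"
    and T: "\<And>x y. T (x + y) = T x + T y" "\<And>a v. T (rhoV a v) = rhoW a (T v)"
  shows "T (kapV w v) = kapW w (T v)"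
proof -
  interpret V: k_alg_module sA sV rhoV sK act kapV by (fact V(1))
  interpret W: k_alg_module sA sW rhoW sK act kapW by (fact W)
  show ?thesis
  proof (rule V.additive_eq_on_span_action[OF V(2)])
    fix a u
    show "T (kapV w (rhoV a u)) = kapW w (T (rhoV a u))"
      by (simp add: V.rho_act_eq_kap_rho[symmetric] W.rho_act_eq_kap_rho[symmetric] T(2))
  qed (simp_all add: T(1) V.kap_add W.kap_add)
qed

lemma equiv_A_iff_equiv_AC:
  assumes V: "k_alg_module sA sV rhoV sK act kapV" "irreducible_AC sA sV rhoV"
    and W: "k_alg_module sA sW rhoW sK act kapW"
  shows "equiv_A sV rhoV kapV sW rhoW kapW \<longleftrightarrow> equiv_AC sV rhoV sW rhoW"
proof
  assume "equiv_AC sV rhoV sW rhoW"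
  then obtain T where T: "Vector_Spaces.linear sV sW T" "bij T" "\<forall>a v. T (rhoV a v) = rhoW a (T v)"
    unfolding equiv_AC_def by blast
  have "T (kapV w v) = kapW w (T v)" for w v
    using intertwiner_commutes_with_k_action[OF V(1)
        alg_module.nondegenerate_if_irreducible_AC(1)[OF k_alg_module.axioms(1)[OF V(1)] V(2)] W]
      T(1,3) by (simp add: Vector_Spaces.linear_iff)
  with T show "equiv_A sV rhoV kapV sW rhoW kapW"
    unfolding equiv_A_def by blast
qed (auto simp: equiv_A_def equiv_AC_def)

locale nondegenerate_alg_module = alg_module sA sV rho
  for sA :: "complex \<Rightarrow> 'a::ring \<Rightarrow> 'a"
    and sV :: "complex \<Rightarrow> 'v::ab_group_add \<Rightarrow> 'v"
    and rho :: "'a \<Rightarrow> 'v \<Rightarrow> 'v" +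
  fixes sK :: "complex \<Rightarrow> 'k::comm_ring_1 \<Rightarrow> 'k"
    and act :: "'k \<Rightarrow> 'a \<Rightarrow> 'a"
  assumes k_algebra: "k_algebra sK sA act"
    and span_action_UNIV: "span_action UNIV = UNIV"
    and annihilated_eq_0: "annihilated = {0}"
begin

sublocale K: module act
  using k_algebra by (simp add: k_algebra_def)

lemma act_mult_left: "act w (a * b) = act w a * b"
  and act_mult_right: "act w (a * b) = a * act w b"
  and scale_act: "sA c (act w a) = act w (sA c a)"
  and scale_act_k: "sA c (act w a) = act (sK c w) a"
  using k_algebra unfolding k_algebra_def by blast+

definition kappa :: "'k \<Rightarrow> 'v \<Rightarrow> 'v" where
  "kappa w v = action_sum rho (map (apfst (act w)) (SOME xs. v = action_sum rho xs))"

lemma rho_action_sum_act: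
  "rho b (action_sum rho (map (apfst (act w)) xs)) = rho (act w b) (action_sum rho xs)"
proof -
  have "b * act w a = act w b * a" for a
    by (metis act_mult_left act_mult_right)
  then show ?thesis
    by (simp add: rho_action_sum apfst_compose comp_def)
qed

lemma action_sum_act_eq:
  assumes "action_sum rho xs = action_sum rho ys"
  shows "action_sum rho (map (apfst (act w)) xs) = action_sum rho (map (apfst (act w)) ys)"
proof -
  let ?d = "action_sum rho (map (apfst (act w)) xs) - action_sum rho (map (apfst (act w)) ys)"
  have "?d \<in> annihilated"
    unfolding annihilated_def by (simp add: rho.diff rho_action_sum_act assms)
  then show ?thesis
    using annihilated_eq_0 by simp
qed

lemma kappa_action_sum: "kappa w (action_sum rho xs) = action_sum rho (map (apfst (act w)) xs)"
proof -
  have "\<exists>ys. action_sum rho xs = action_sum rho ys"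
    by blast
  then show ?thesis
    unfolding kappa_def by (rule action_sum_act_eq[OF someI_ex, symmetric])
qed

lemma kappa_rho: "kappa w (rho a v) = rho (act w a) v"
  using kappa_action_sum[of w "[(a, v)]"] by simp

lemma kappa_add: "kappa w (x + y) = kappa w x + kappa w y"
proof -
  obtain xs ys where "x = action_sum rho xs" "y = action_sum rho ys"
    using span_action_UNIV unfolding span_action_def by blast
  then show ?thesis
    using kappa_action_sum[of w "xs @ ys"] by (simp add: kappa_action_sum)
qed

lemma additive_eqI:
  fixes f g :: "'v \<Rightarrow> 'v"
  assumes "\<And>x y. f (x + y) = f x + f y" "\<And>x y. g (x + y) = g x + g y"
    and "\<And>a v. f (rho a v) = g (rho a v)"
  shows "f = g"
  using additive_eq_on_span_action[OF span_action_UNIV assms] by blast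

lemma linear_kappa: "Vector_Spaces.linear sV sV (kappa w)"
proof -
  have "sV c \<circ> kappa w = kappa w \<circ> sV c" for c
    by (rule additive_eqI) (simp_all add: kappa_add V.scale_right_distrib kappa_rho
        rho_scale_left[symmetric] scale_act)
  then show ?thesis
    unfolding Vector_Spaces.linear_iff by (simp add: V.vector_space_axioms kappa_add fun_eq_iff)
qed

lemma kappa_add_left: "kappa (w + u) = (\<lambda>v. kappa w v + kappa u v)"
  by (rule additive_eqI) (simp_all add: kappa_add kappa_rho K.scale_left_distrib rho_add_left)

lemma kappa_scale_left: "kappa (sK c w) = sV c \<circ> kappa w"
  by (rule additive_eqI)
    (simp_all add: kappa_add kappa_rho V.scale_right_distrib scale_act_k[symmetric] rho_scale_left)

lemma kappa_mult: "kappa (w * u) = kappa w \<circ> kappa u"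
  by (rule additive_eqI) (simp_all add: kappa_add kappa_rho K.scale_scale)

lemma kappa_one: "kappa 1 = id"
  by (rule additive_eqI) (simp_all add: kappa_add kappa_rho)

lemma rho_act_eq_rho_kappa: "rho (act w a) = rho a \<circ> kappa w"
  by (rule additive_eqI) (simp_all add: kappa_add kappa_rho rho.add rho_mult[symmetric]
      act_mult_left[symmetric] act_mult_right[symmetric])

lemma A_module_kappa: "A_module sK sA act sV rho kappa"
  unfolding A_module_def
proof (intro conjI allI)
  fix w u c v a
  show "kappa (w + u) v = kappa w v + kappa u v"
    by (simp add: kappa_add_left)
  show "kappa (sK c w) v = sV c (kappa w v)"
    by (simp add: kappa_scale_left)
  show "kappa (w * u) v = kappa w (kappa u v)"
    by (simp add: kappa_mult)
  show "kappa 1 v = v"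
    by (simp add: kappa_one)
  show "rho (act w a) v = kappa w (rho a v)"
    by (simp add: kappa_rho)
  show "rho (act w a) v = rho a (kappa w v)"
    by (simp add: rho_act_eq_rho_kappa)
qed (fact AC_module linear_kappa)+

end

lemma nondegenerate_alg_module_if_irreducible_AC:
  assumes "k_algebra sK sA act" and irr: "irreducible_AC sA sV rho"
  shows "nondegenerate_alg_module sA sV rho sK act"
proof -
  interpret alg_module sA sV rho
    using irr by unfold_locales (simp add: irreducible_AC_def)
  show ?thesis
    by unfold_locales (use assms(1) nondegenerate_if_irreducible_AC[OF irr] in auto)
qed

theorem corollary3p4:
  fixes sK :: "complex \<Rightarrow> 'k::comm_ring_1 \<Rightarrow> 'k"
    and sA :: "complex \<Rightarrow> 'a::ring \<Rightarrow> 'a"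
    and act :: "'k \<Rightarrow> 'a \<Rightarrow> 'a"
  assumes "coordinate_algebra sK"
    and "k_algebra sK sA act"
  shows
    "(\<forall>(sV :: complex \<Rightarrow> 'v::ab_group_add \<Rightarrow> 'v) rho kap.
        irreducible_A sK sA act sV rho kap \<longrightarrow> irreducible_AC sA sV rho)
     \<and> (\<forall>(sV :: complex \<Rightarrow> 'v \<Rightarrow> 'v) rhoV kapV (sW :: complex \<Rightarrow> 'w::ab_group_add \<Rightarrow> 'w) rhoW kapW.
        irreducible_A sK sA act sV rhoV kapV \<longrightarrow> irreducible_A sK sA act sW rhoW kapW \<longrightarrow>
        equiv_A sV rhoV kapV sW rhoW kapW \<longrightarrow> equiv_AC sV rhoV sW rhoW)
     \<and> (\<forall>(sV :: complex \<Rightarrow> 'v \<Rightarrow> 'v) rhoV kapV (sW :: complex \<Rightarrow> 'w \<Rightarrow> 'w) rhoW kapW.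
        irreducible_A sK sA act sV rhoV kapV \<longrightarrow> irreducible_A sK sA act sW rhoW kapW \<longrightarrow>
        equiv_AC sV rhoV sW rhoW \<longrightarrow> equiv_A sV rhoV kapV sW rhoW kapW)
     \<and> (\<forall>(sV :: complex \<Rightarrow> 'v \<Rightarrow> 'v) rho.
        irreducible_AC sA sV rho \<longrightarrow> (\<exists>kap. irreducible_A sK sA act sV rho kap))"
proof (intro conjI allI impI)
  fix sV :: "complex \<Rightarrow> 'v \<Rightarrow> 'v" and rho kap
  assume "irreducible_A sK sA act sV rho kap"
  then show "irreducible_AC sA sV rho"
    using k_alg_module.irreducible_A_iff_irreducible_AC[OF k_alg_module_if_irreducible_A] by blast
next
  fix sV :: "complex \<Rightarrow> 'v \<Rightarrow> 'v" and rhoV kapV and sW :: "complex \<Rightarrow> 'w \<Rightarrow> 'w" and rhoW kapW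
  assume V: "irreducible_A sK sA act sV rhoV kapV" and W: "irreducible_A sK sA act sW rhoW kapW"
  have "equiv_A sV rhoV kapV sW rhoW kapW \<longleftrightarrow> equiv_AC sV rhoV sW rhoW"
    using equiv_A_iff_equiv_AC k_alg_module_if_irreducible_A[OF V] k_alg_module_if_irreducible_A[OF W]
      k_alg_module.irreducible_A_iff_irreducible_AC V by blast
  then show "equiv_A sV rhoV kapV sW rhoW kapW \<Longrightarrow> equiv_AC sV rhoV sW rhoW"
    and "equiv_AC sV rhoV sW rhoW \<Longrightarrow> equiv_A sV rhoV kapV sW rhoW kapW"
    by blast+
next
  fix sV :: "complex \<Rightarrow> 'v \<Rightarrow> 'v" and rho
  assume irr: "irreducible_AC sA sV rho"
  then interpret nondegenerate_alg_module sA sV rho sK act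
    by (rule nondegenerate_alg_module_if_irreducible_AC[OF assms(2)])
  have "irreducible_A sK sA act sV rho kappa"
    using k_alg_module.irreducible_A_iff_irreducible_AC[OF k_alg_module_if_A_module[OF A_module_kappa]]
      irr by blast
  then show "\<exists>kap. irreducible_A sK sA act sV rho kap"
    by blast
qed

end
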